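(* Let $n\ge 4$, $d\ge 2$, and $\mathbf h\in\mathbb{R}^{\binom{n+d-1}{d}}$ decomposed as $\mathbf h=(\mathbf h_0,\dots,\mathbf h_d)$. Suppose $\sum_{i=1}^{d-2}N(\mathbf h_i)+N(\mathbf h_d)=0$, $P(\mathbf h_d)=N(\mathbf h_{d-1})=2$, and $J_{n,d}\mathbf h\ge 0$. Then $R(J_{n,d}\mathbf h)\ge 3n-4$.
   Context: For a real vector $\mathbf x$, $P(\mathbf x)$, $N(\mathbf x)$, $R(\mathbf x)$ denote the numbers of positive, negative and nonzero components; inequalities are componentwise. $J_{m,j}$ is the matrix, with respect to the left lexicographic bases of degree-$j$ and degree-$(j+1)$ monomials in $m$ variables, of multiplication by the sum of the variables. If $\mathbf h$ is the coordinate vector of $A(x)=\sum_{j=0}^d x_1^{d-j}A_j(x_2,\dots,x_n)$ ($A_j$ homogeneous of degree $j$), then $\mathbf h_j$ is the coordinate vector of $A_j$ in the left lexicographic basis of degree-$j$ monomials in $x_2,\dots,x_n$. *)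

theory Defs
  imports Complex_Main
begin

text \<open>Monomials of degree d in m variables, indexed 0..m-1 (index 0 is x_1),
  represented by exponent vectors. A coordinate vector w.r.t. the monomial basis
  is represented as a real-valued function on exponent vectors (only values on
  monoms m d matter).\<close>

definition monoms :: "nat \<Rightarrow> nat \<Rightarrow> (nat \<Rightarrow> nat) set" where
  "monoms m d = {\<alpha>. (\<forall>i\<ge>m. \<alpha> i = 0) \<and> (\<Sum>i<m. \<alpha> i) = d}"

definition Pcount :: "'a set \<Rightarrow> ('a \<Rightarrow> real) \<Rightarrow> nat" where
  "Pcount S v = card {x\<in>S. v x > 0}"
definition Ncount :: "'a set \<Rightarrow> ('a \<Rightarrow> real) \<Rightarrow> nat" where
  "Ncount S v = card {x\<in>S. v x < 0}"
definition Rcount :: "'a set \<Rightarrow> ('a \<Rightarrow> real) \<Rightarrow> nat" where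
  "Rcount S v = card {x\<in>S. v x \<noteq> 0}"

text \<open>J_{m,d}: multiplication by x_1+...+x_m, mapping degree-d coefficient vectors
  to degree-(d+1) coefficient vectors: (J h)_\<beta> = sum over i with \<beta>_i>0 of h_{\<beta>-e_i}.\<close>
definition Jmat :: "nat \<Rightarrow> nat \<Rightarrow> ((nat \<Rightarrow> nat) \<Rightarrow> real) \<Rightarrow> (nat \<Rightarrow> nat) \<Rightarrow> real" where
  "Jmat m d h \<beta> = (\<Sum>i\<in>{i. i < m \<and> 0 < \<beta> i}. h (\<beta>(i := \<beta> i - 1)))"

text \<open>h_j: coordinate vector of A_j(x_2,...,x_n), where A = sum_j x_1^(d-j) A_j;
  monomials of A_j are indexed as monomials in n-1 variables (x_2 \<mapsto> index 0).\<close>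
definition hpart :: "nat \<Rightarrow> ((nat \<Rightarrow> nat) \<Rightarrow> real) \<Rightarrow> nat \<Rightarrow> (nat \<Rightarrow> nat) \<Rightarrow> real" where
  "hpart d h j \<gamma> = h (\<lambda>i. if i = 0 then d - j else \<gamma> (i - 1))"

end

theory Submission
  imports Defs
begin

text \<open>Sort monomials by their exponent of \<open>x\<^sub>1\<close>, their layer. The hypotheses make \<open>h\<close>
  nonnegative outside layer 1, with exactly two positive coefficients \<open>x\<^sup>\<mu>, x\<^sup>\<nu>\<close> on
  layer 0 and exactly two negative ones on layer 1; nonnegativity of \<open>J h\<close> at \<open>x\<^sub>1\<close> times a
  negative coefficient forces a positive coefficient \<open>x\<^sup>\<rho>\<close> on layer 2. Counting the
  nonzero coefficients of \<open>J h\<close> layer by layer: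
  \<^item> layer 0: the monomials \<open>x\<^sup>\<mu> x\<^sub>i\<close> and \<open>x\<^sup>\<nu> x\<^sub>i\<close> (\<open>i > 1\<close>), two families of \<open>n - 1\<close>
    sharing at most one monomial, give \<open>2n - 3\<close>;
  \<^item> layer 1: if \<open>J h\<close> vanished there, then for every \<open>i > 1\<close> a nonzero coefficient of
    layer 1 with maximal \<open>x\<^sub>i\<close>-exponent, multiplied by \<open>x\<^sub>i\<close>, could only be cancelled from
    layer 0, producing \<open>n - 1 > 2\<close> distinct nonzero coefficients there; so at least 1;
  \<^item> layer 2: \<open>x\<^sup>\<rho> x\<^sub>i\<close> (\<open>i > 1\<close>) is nonzero unless \<open>x\<^sup>\<rho> x\<^sub>i / x\<^sub>1\<close> is one of the two
    negative coefficients, giving \<open>n - 3\<close>;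
  \<^item> layer 3: \<open>x\<^sup>\<rho> x\<^sub>1\<close> is nonzero.
  Altogether \<open>3n - 4\<close>.\<close>

lemma monoms_coord_le: "\<alpha> \<in> monoms m d \<Longrightarrow> \<alpha> i \<le> d"
  unfolding monoms_def using member_le_sum[of i "{..<m}" \<alpha>] by (cases "i < m") auto

lemma finite_monoms: "finite (monoms m d)"
proof (rule finite_subset)
  show "monoms m d \<subseteq> {\<alpha>. \<forall>i. (i \<in> {..<m} \<longrightarrow> \<alpha> i \<in> {..d}) \<and> (i \<notin> {..<m} \<longrightarrow> \<alpha> i = 0)}"
  proof
    fix \<alpha> assume "\<alpha> \<in> monoms m d"
    then show "\<alpha> \<in> {\<alpha>. \<forall>i. (i \<in> {..<m} \<longrightarrow> \<alpha> i \<in> {..d}) \<and> (i \<notin> {..<m} \<longrightarrow> \<alpha> i = 0)}"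
      using monoms_coord_le[of \<alpha> m d] by (auto simp: monoms_def)
  qed
  show "finite {\<alpha>. \<forall>i. (i \<in> {..<m} \<longrightarrow> \<alpha> i \<in> {..d}) \<and> (i \<notin> {..<m} \<longrightarrow> \<alpha> i = (0::nat))}"
    by (rule finite_set_of_finite_funs) auto
qed

lemma finite_monoms_Collect: "finite {\<alpha> \<in> monoms m d. P \<alpha>}"
  using finite_monoms by (rule rev_finite_subset) auto

lemma sum_fun_upd_nat:
  assumes "i < (m::nat)"
  shows "(\<Sum>k<m. (\<alpha>(i := x)) k) + \<alpha> i = (\<Sum>k<m. \<alpha> k) + (x::nat)"
proof -
  have "(\<Sum>k<m. \<alpha> k) = \<alpha> i + (\<Sum>k\<in>{..<m} - {i}. \<alpha> k)"
    by (rule sum.remove) (use assms in auto)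
  moreover have "(\<Sum>k<m. (\<alpha>(i := x)) k) = x + (\<Sum>k\<in>{..<m} - {i}. \<alpha> k)"
    using assms by (simp add: fun_upd_def sum.delta_remove)
  ultimately show ?thesis by simp
qed

lemma monoms_raise: "\<alpha> \<in> monoms m d \<Longrightarrow> i < m \<Longrightarrow> \<alpha>(i := Suc (\<alpha> i)) \<in> monoms m (Suc d)"
  using sum_fun_upd_nat[of i m \<alpha> "Suc (\<alpha> i)"] by (auto simp: monoms_def)

lemma monoms_lower: "\<beta> \<in> monoms m (Suc d) \<Longrightarrow> 0 < \<beta> i \<Longrightarrow> \<beta>(i := \<beta> i - 1) \<in> monoms m d"
  using sum_fun_upd_nat[of i m \<beta> "\<beta> i - 1"] by (cases "i < m") (auto simp: monoms_def)

lemma monoms_pure_power: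
  assumes "\<alpha> \<in> monoms m d" "k < m" "\<alpha> k = d"
  shows "\<alpha> = (\<lambda>i. if i = k then d else 0)"
proof
  fix i
  have "(\<Sum>i\<in>{..<m} - {k}. \<alpha> i) = 0"
    using assms sum.remove[of "{..<m}" k \<alpha>] by (simp add: monoms_def)
  then show "\<alpha> i = (if i = k then d else 0)"
    using assms by (cases "i < m") (auto simp: monoms_def)
qed

lemma Jmat_pure_power:
  assumes "\<alpha> \<in> monoms m d" "k < m" "\<alpha> k = d"
  shows "Jmat m d h (\<alpha>(k := Suc d)) = h \<alpha>"
proof -
  have \<alpha>: "\<alpha> = (\<lambda>i. if i = k then d else 0)" by (rule monoms_pure_power[OF assms])
  have "{i. i < m \<and> 0 < (\<alpha>(k := Suc d)) i} = {k}" using assms(2) by (subst \<alpha>) auto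
  moreover have "\<alpha>(k := d) = \<alpha>" using assms(3) by auto
  ultimately show ?thesis by (simp add: Jmat_def)
qed

lemma Jmat_raise_pos:
  assumes "\<alpha> \<in> monoms m d" "i < m" "0 < h \<alpha>"
    and "\<And>k. k < m \<Longrightarrow> k \<noteq> i \<Longrightarrow> 0 < \<alpha> k \<Longrightarrow> 0 \<le> h (\<alpha>(i := Suc (\<alpha> i), k := \<alpha> k - 1))"
  shows "0 < Jmat m d h (\<alpha>(i := Suc (\<alpha> i)))"
  unfolding Jmat_def
proof (rule sum_pos2[of _ i])
  fix k assume "k \<in> {k. k < m \<and> 0 < (\<alpha>(i := Suc (\<alpha> i))) k}"
  then show "0 \<le> h ((\<alpha>(i := Suc (\<alpha> i)))(k := (\<alpha>(i := Suc (\<alpha> i))) k - 1))"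
    using assms(3) assms(4)[of k] by (cases "k = i") auto
qed (use assms in auto)

lemma Jmat_eq_two_terms:
  assumes "i < m" "j < m" "i \<noteq> j" "0 < \<beta> i" "0 < \<beta> j"
    and "\<And>k. k < m \<Longrightarrow> 0 < \<beta> k \<Longrightarrow> k \<noteq> i \<Longrightarrow> k \<noteq> j \<Longrightarrow> h (\<beta>(k := \<beta> k - 1)) = 0"
  shows "Jmat m d h \<beta> = h (\<beta>(i := \<beta> i - 1)) + h (\<beta>(j := \<beta> j - 1))"
proof -
  have "Jmat m d h \<beta> = (\<Sum>k\<in>{i, j}. h (\<beta>(k := \<beta> k - 1)))"
    unfolding Jmat_def using assms by (intro sum.mono_neutral_right) auto
  then show ?thesis using assms(3) by simp
qed

lemma exists_pos_lower_neighbour: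
  assumes "0 \<le> Jmat m d h \<beta>" "i < m" "0 < \<beta> i" "h (\<beta>(i := \<beta> i - 1)) < 0"
  obtains k where "k < m" "k \<noteq> i" "0 < \<beta> k" "0 < h (\<beta>(k := \<beta> k - 1))"
proof -
  let ?K = "{k. k < m \<and> 0 < \<beta> k}"
  have "Jmat m d h \<beta> = h (\<beta>(i := \<beta> i - 1)) + (\<Sum>k\<in>?K - {i}. h (\<beta>(k := \<beta> k - 1)))"
    unfolding Jmat_def using assms by (subst sum.remove[of _ i]) auto
  then have "\<not> (\<forall>k\<in>?K - {i}. h (\<beta>(k := \<beta> k - 1)) \<le> 0)"
    using assms sum_nonpos[of "?K - {i}" "\<lambda>k. h (\<beta>(k := \<beta> k - 1))"] by fastforce
  then obtain k where "k \<in> ?K - {i}" "0 < h (\<beta>(k := \<beta> k - 1))" by (auto simp: not_le)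
  then show ?thesis using that by blast
qed

definition lift_monom :: "nat \<Rightarrow> (nat \<Rightarrow> nat) \<Rightarrow> nat \<Rightarrow> nat" where
  "lift_monom k \<gamma> = (\<lambda>i. if i = 0 then k else \<gamma> (i - 1))"

lemma sum_lift_monom: "(\<Sum>i<Suc m. lift_monom k \<gamma> i) = k + (\<Sum>i<m. \<gamma> i)"
  by (simp add: sum.lessThan_Suc_shift lift_monom_def del: sum.lessThan_Suc)

lemma bij_betw_lift_monom:
  "bij_betw (lift_monom k) (monoms m j) {\<alpha> \<in> monoms (Suc m) (k + j). \<alpha> 0 = k}"
proof (rule bij_betw_byWitness[where f' = "\<lambda>\<alpha> i. \<alpha> (Suc i)"])
  show "\<forall>\<gamma>\<in>monoms m j. (\<lambda>i. lift_monom k \<gamma> (Suc i)) = \<gamma>"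
    by (simp add: lift_monom_def)
  show "\<forall>\<alpha>\<in>{\<alpha> \<in> monoms (Suc m) (k + j). \<alpha> 0 = k}. lift_monom k (\<lambda>i. \<alpha> (Suc i)) = \<alpha>"
    by (auto simp: lift_monom_def fun_eq_iff)
  show "lift_monom k ` monoms m j \<subseteq> {\<alpha> \<in> monoms (Suc m) (k + j). \<alpha> 0 = k}"
    by (auto simp: monoms_def sum_lift_monom simp del: sum.lessThan_Suc) (auto simp: lift_monom_def)
  show "(\<lambda>\<alpha> i. \<alpha> (Suc i)) ` {\<alpha> \<in> monoms (Suc m) (k + j). \<alpha> 0 = k} \<subseteq> monoms m j"
    by (auto simp: monoms_def sum.lessThan_Suc_shift simp del: sum.lessThan_Suc)
qed

lemma card_hpart_layer:
  assumes "j \<le> d" "0 < n"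
  shows "card {\<gamma> \<in> monoms (n - 1) j. P (hpart d h j \<gamma>)}
       = card {\<alpha> \<in> monoms n d. \<alpha> 0 = d - j \<and> P (h \<alpha>)}"
proof -
  have "bij_betw (lift_monom (d - j)) (monoms (n - 1) j) {\<alpha> \<in> monoms n d. \<alpha> 0 = d - j}"
    using bij_betw_lift_monom[of "d - j" "n - 1" j] assms by simp
  then have "bij_betw (lift_monom (d - j)) {\<gamma> \<in> monoms (n - 1) j. P (hpart d h j \<gamma>)}
      {\<alpha> \<in> {\<alpha> \<in> monoms n d. \<alpha> 0 = d - j}. P (h \<alpha>)}"
    by (rule bij_betw_Collect) (simp add: hpart_def lift_monom_def)
  then show ?thesis by (simp add: bij_betw_same_card)
qed

lemma inj_on_fun_upd_Suc: "inj_on (\<lambda>i. \<alpha>(i := Suc (\<alpha> i))) I"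
proof (rule inj_onI)
  fix i j assume "\<alpha>(i := Suc (\<alpha> i)) = \<alpha>(j := Suc (\<alpha> j))"
  then have "(\<alpha>(i := Suc (\<alpha> i))) i = (\<alpha>(j := Suc (\<alpha> j))) i" by simp
  then show "i = j" by (cases "i = j") auto
qed

lemma card_raises_Int_le_1:
  assumes "\<alpha> \<noteq> \<alpha>'"
  shows "card ((\<lambda>i. \<alpha>(i := Suc (\<alpha> i))) ` I \<inter> (\<lambda>i. \<alpha>'(i := Suc (\<alpha>' i))) ` I) \<le> 1"
    (is "card (?A \<inter> ?A') \<le> 1")
proof -
  have raises_eq: "x = y"
    if x: "\<alpha>(i := Suc (\<alpha> i)) = x" "\<alpha>'(j := Suc (\<alpha>' j)) = x"
      and y: "\<alpha>(k := Suc (\<alpha> k)) = y" "\<alpha>'(l := Suc (\<alpha>' l)) = y" for x y i j k l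
  proof -
    have "i \<noteq> j"
    proof
      assume "i = j"
      have "\<alpha> c = \<alpha>' c" for c
        using fun_cong[OF x(1)[THEN trans, OF x(2)[symmetric]], of c] \<open>i = j\<close> by (cases "c = i") auto
      then show False using assms by auto
    qed
    have "i = k"
    proof (rule ccontr)
      assume "i \<noteq> k"
      have "Suc (\<alpha> i) = \<alpha>' i"
        using fun_cong[OF x(1)[THEN trans, OF x(2)[symmetric]], of i] \<open>i \<noteq> j\<close> by simp
      moreover have "\<alpha>' i \<le> \<alpha> i"
        using fun_cong[OF y(1)[THEN trans, OF y(2)[symmetric]], of i] \<open>i \<noteq> k\<close> by (cases "i = l") auto
      ultimately show False by simp
    qed
    then show "x = y" using x y by simp
  qed
  have unique: "\<forall>x\<in>?A \<inter> ?A'. \<forall>y\<in>?A \<inter> ?A'. x = y"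
  proof (intro ballI)
    fix x y assume "x \<in> ?A \<inter> ?A'" "y \<in> ?A \<inter> ?A'"
    then obtain i j k l where "\<alpha>(i := Suc (\<alpha> i)) = x" "\<alpha>'(j := Suc (\<alpha>' j)) = x"
      "\<alpha>(k := Suc (\<alpha> k)) = y" "\<alpha>'(l := Suc (\<alpha>' l)) = y"
      by (auto simp only: Int_iff image_iff)
    then show "x = y" by (rule raises_eq)
  qed
  show ?thesis
  proof (cases "finite (?A \<inter> ?A')")
    case True
    from True unique show ?thesis unfolding One_nat_def by (rule iffD2[OF card_le_Suc0_iff_eq])
  qed simp
qed

lemma card_Jmat_nonzero_bottom_layer:
  assumes \<alpha>: "\<alpha> \<in> monoms n d" "\<alpha> 0 = 0" "0 < h \<alpha>"
    and \<alpha>': "\<alpha>' \<in> monoms n d" "\<alpha>' 0 = 0" "0 < h \<alpha>'"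
    and "\<alpha> \<noteq> \<alpha>'"
    and nonneg: "\<And>\<gamma>. \<gamma> \<in> monoms n d \<Longrightarrow> \<gamma> 0 = 0 \<Longrightarrow> 0 \<le> h \<gamma>"
  shows "2 * n - 3 \<le> card {\<beta> \<in> monoms n (Suc d). \<beta> 0 = 0 \<and> Jmat n d h \<beta> \<noteq> 0}"
    (is "_ \<le> card ?Z")
proof -
  let ?A = "\<lambda>\<gamma>. (\<lambda>i. \<gamma>(i := Suc (\<gamma> i))) ` {1..<n}"
  have raises_in: "?A \<gamma> \<subseteq> ?Z" if \<gamma>: "\<gamma> \<in> monoms n d" "\<gamma> 0 = 0" "0 < h \<gamma>" for \<gamma>
  proof
    fix \<beta> assume "\<beta> \<in> ?A \<gamma>"
    then obtain i where i: "i \<in> {1..<n}" and \<beta>: "\<beta> = \<gamma>(i := Suc (\<gamma> i))" by blast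
    have "0 < Jmat n d h \<beta>" unfolding \<beta>
    proof (rule Jmat_raise_pos)
      show "\<gamma> \<in> monoms n d" "i < n" "0 < h \<gamma>" using \<gamma> i by auto
      fix k assume "k < n" "k \<noteq> i" "0 < \<gamma> k"
      then show "0 \<le> h (\<gamma>(i := Suc (\<gamma> i), k := \<gamma> k - 1))"
        using \<gamma> i monoms_lower[OF monoms_raise[OF \<gamma>(1)], of i k] by (intro nonneg) auto
    qed
    then show "\<beta> \<in> ?Z" using monoms_raise[OF \<gamma>(1)] i \<gamma>(2) \<beta> by auto
  qed
  have "card (?A \<alpha>) + card (?A \<alpha>') = card (?A \<alpha> \<union> ?A \<alpha>') + card (?A \<alpha> \<inter> ?A \<alpha>')"
    by (rule card_Un_Int) auto
  moreover have "card (?A \<alpha>) = n - 1" "card (?A \<alpha>') = n - 1"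
    by (simp_all add: card_image inj_on_fun_upd_Suc)
  moreover have "card (?A \<alpha> \<inter> ?A \<alpha>') \<le> 1"
    using \<open>\<alpha> \<noteq> \<alpha>'\<close> by (rule card_raises_Int_le_1)
  moreover have "card (?A \<alpha> \<union> ?A \<alpha>') \<le> card ?Z"
    using raises_in[OF \<alpha>] raises_in[OF \<alpha>'] by (intro card_mono finite_monoms_Collect) auto
  ultimately show ?thesis by linarith
qed

lemma nonzero_below_of_max_exponent:
  assumes J0: "\<And>\<beta>. \<beta> \<in> monoms n (Suc d) \<Longrightarrow> \<beta> 0 = Suc a \<Longrightarrow> Jmat n d h \<beta> = 0"
    and \<tau>: "\<tau> \<in> monoms n d" "\<tau> 0 = Suc a" "h \<tau> \<noteq> 0" and j: "j \<noteq> 0" "j < n"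
    and max: "\<And>\<sigma>. \<sigma> \<in> monoms n d \<Longrightarrow> \<sigma> 0 = Suc a \<Longrightarrow> h \<sigma> \<noteq> 0 \<Longrightarrow> \<sigma> j \<le> \<tau> j"
  shows "h (\<tau>(0 := a, j := Suc (\<tau> j))) \<noteq> 0"
proof -
  define \<beta> where "\<beta> = \<tau>(j := Suc (\<tau> j))"
  have \<beta>: "\<beta> \<in> monoms n (Suc d)" "\<beta> 0 = Suc a"
    using monoms_raise[OF \<tau>(1) j(2)] j(1) \<tau>(2) by (simp_all add: \<beta>_def)
  have "Jmat n d h \<beta> = h (\<beta>(0 := \<beta> 0 - 1)) + h (\<beta>(j := \<beta> j - 1))"
  proof (rule Jmat_eq_two_terms)
    show "0 < n" "j < n" "0 \<noteq> j" "0 < \<beta> 0" "0 < \<beta> j" using j \<beta>(2) by (auto simp: \<beta>_def)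
    fix k assume k: "k < n" "0 < \<beta> k" "k \<noteq> 0" "k \<noteq> j"
    have "\<not> (\<beta>(k := \<beta> k - 1)) j \<le> \<tau> j" using k by (simp add: \<beta>_def)
    then show "h (\<beta>(k := \<beta> k - 1)) = 0"
      using max[OF monoms_lower[OF \<beta>(1) k(2)]] k(3) \<beta>(2) by auto
  qed
  moreover have "Jmat n d h \<beta> = 0" using J0[OF \<beta>] .
  moreover have "\<beta>(j := \<beta> j - 1) = \<tau>" by (simp add: \<beta>_def)
  moreover have "\<beta>(0 := \<beta> 0 - 1) = \<tau>(0 := a, j := Suc (\<tau> j))"
    using j(1) \<beta>(2) by (auto simp: \<beta>_def fun_eq_iff)
  ultimately show ?thesis using \<tau>(3) by auto
qed

lemma card_nonzero_layer_ge_if_Jmat_vanishes: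
  assumes J0: "\<And>\<beta>. \<beta> \<in> monoms n (Suc d) \<Longrightarrow> \<beta> 0 = Suc a \<Longrightarrow> Jmat n d h \<beta> = 0"
    and "\<alpha> \<in> monoms n d" "\<alpha> 0 = Suc a" "h \<alpha> \<noteq> 0"
  shows "n - 1 \<le> card {\<gamma> \<in> monoms n d. \<gamma> 0 = a \<and> h \<gamma> \<noteq> 0}"
    (is "_ \<le> card ?G")
proof -
  define T where "T = {\<tau> \<in> monoms n d. \<tau> 0 = Suc a \<and> h \<tau> \<noteq> 0}"
  have "\<alpha> \<in> T" using assms(2-4) by (simp add: T_def)
  have "\<forall>j. \<exists>\<tau>. \<tau> \<in> T \<and> (\<forall>\<sigma>. \<sigma> \<in> T \<longrightarrow> \<sigma> j \<le> \<tau> j)"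
  proof
    fix j
    have "\<forall>\<sigma>. \<sigma> \<in> T \<longrightarrow> \<sigma> j < Suc d" by (auto simp: T_def less_Suc_eq_le monoms_coord_le)
    then show "\<exists>\<tau>. \<tau> \<in> T \<and> (\<forall>\<sigma>. \<sigma> \<in> T \<longrightarrow> \<sigma> j \<le> \<tau> j)"
      by (rule Lattices_Big.ex_has_greatest_nat[of "\<lambda>\<tau>. \<tau> \<in> T", OF \<open>\<alpha> \<in> T\<close>])
  qed
  then obtain \<tau> where \<tau>: "\<forall>j. \<tau> j \<in> T \<and> (\<forall>\<sigma>. \<sigma> \<in> T \<longrightarrow> \<sigma> j \<le> \<tau> j j)"
    by (rule choice[THEN exE])
  text \<open>\<open>g j\<close> exceeds every element of \<open>T\<close> in the \<open>x\<^sub>j\<close>-exponent, whereas each other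
    \<open>g j'\<close> shares its \<open>x\<^sub>j\<close>-exponent with \<open>\<tau> j' \<in> T\<close>; hence \<open>g\<close> is injective.\<close>
  define g where "g j = (\<tau> j)(0 := a, j := Suc (\<tau> j j))" for j
  have "g j \<in> ?G" if j: "j \<in> {1..<n}" for j
  proof -
    have \<tau>j: "\<tau> j \<in> monoms n d" "\<tau> j 0 = Suc a" "h (\<tau> j) \<noteq> 0" using \<tau> by (auto simp: T_def)
    have "(\<tau> j)(j := Suc (\<tau> j j), 0 := a) \<in> monoms n d"
      using monoms_lower[OF monoms_raise[OF \<tau>j(1)], of j 0] j \<tau>j(2) by simp
    moreover have "h (g j) \<noteq> 0"
      unfolding g_def using j \<tau>
      by (intro nonzero_below_of_max_exponent[of n d a h "\<tau> j" j, OF J0 \<tau>j]) (auto simp: T_def)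
    ultimately show ?thesis using j by (simp add: g_def fun_upd_twist)
  qed
  moreover have "inj_on g {1..<n}"
  proof (rule inj_onI)
    fix j j' assume j: "j \<in> {1..<n}" "j' \<in> {1..<n}" "g j = g j'"
    show "j = j'"
    proof (rule ccontr)
      assume "j \<noteq> j'"
      then have "g j' j \<le> \<tau> j j" using \<tau> j(1,2) by (auto simp: g_def)
      moreover have "g j j = Suc (\<tau> j j)" by (simp add: g_def)
      ultimately show False using j(3) by simp
    qed
  qed
  moreover have "finite ?G" by (rule finite_monoms_Collect)
  ultimately have "card {1..<n} \<le> card ?G" by (intro card_inj_on_le) auto
  then show ?thesis by simp
qed

lemma card_Jmat_nonzero_layer_ge:
  assumes r: "r \<in> monoms n d" "r 0 = Suc a" "0 < h r"
    and nonneg: "\<And>\<gamma>. \<gamma> \<in> monoms n d \<Longrightarrow> \<gamma> 0 = Suc a \<Longrightarrow> 0 \<le> h \<gamma>"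
  shows "n - 1 - card {\<gamma> \<in> monoms n d. \<gamma> 0 = a \<and> h \<gamma> < 0}
      \<le> card {\<beta> \<in> monoms n (Suc d). \<beta> 0 = Suc a \<and> Jmat n d h \<beta> \<noteq> 0}"
    (is "n - 1 - card ?N \<le> card ?Z")
proof -
  define r' where "r' = r(0 := a)"
  define B where "B = {i \<in> {1..<n}. r'(i := Suc (r' i)) \<in> ?N}"
  have "card B \<le> card ?N"
    by (intro card_inj_on_le[of "\<lambda>i. r'(i := Suc (r' i))"]) (auto simp: B_def inj_on_fun_upd_Suc finite_monoms_Collect)
  have "(\<lambda>i. r(i := Suc (r i))) ` ({1..<n} - B) \<subseteq> ?Z"
  proof
    fix \<beta> assume "\<beta> \<in> (\<lambda>i. r(i := Suc (r i))) ` ({1..<n} - B)"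
    then obtain i where i: "i \<in> {1..<n}" "i \<notin> B" and \<beta>: "\<beta> = r(i := Suc (r i))" by blast
    have "0 < Jmat n d h \<beta>" unfolding \<beta>
    proof (rule Jmat_raise_pos)
      show "r \<in> monoms n d" "i < n" "0 < h r" using r i by auto
      fix k assume k: "k < n" "k \<noteq> i" "0 < r k"
      let ?\<gamma> = "r(i := Suc (r i), k := r k - 1)"
      have \<gamma>: "?\<gamma> \<in> monoms n d" using monoms_lower[OF monoms_raise[OF r(1)], of i k] k i by simp
      show "0 \<le> h ?\<gamma>"
      proof (cases "k = 0")
        case True
        then have "?\<gamma> = r'(i := Suc (r' i))" using i r(2) by (auto simp: r'_def fun_eq_iff)
        then show ?thesis using i \<gamma> by (auto simp: B_def r'_def not_less)
      next
        case False
        then show ?thesis using \<gamma> i r(2) by (intro nonneg) auto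
      qed
    qed
    then show "\<beta> \<in> ?Z" using monoms_raise[OF r(1)] i r(2) \<beta> by auto
  qed
  then have "card ((\<lambda>i. r(i := Suc (r i))) ` ({1..<n} - B)) \<le> card ?Z"
    by (intro card_mono finite_monoms_Collect)
  moreover have "card ((\<lambda>i. r(i := Suc (r i))) ` ({1..<n} - B)) = card ({1..<n} - B)"
    by (simp add: card_image inj_on_fun_upd_Suc)
  moreover have "card {1..<n} - card B \<le> card ({1..<n} - B)"
    by (rule diff_card_le_card_Diff) (simp add: B_def)
  ultimately show ?thesis using \<open>card B \<le> card ?N\<close> by simp
qed

lemma card_Jmat_nonzero_layer_pos_if_sparse_below:
  assumes sparse: "card {\<gamma> \<in> monoms n d. \<gamma> 0 = a \<and> h \<gamma> \<noteq> 0} < n - 1"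
    and "\<alpha> \<in> monoms n d" "\<alpha> 0 = Suc a" "h \<alpha> \<noteq> 0"
  shows "0 < card {\<beta> \<in> monoms n (Suc d). \<beta> 0 = Suc a \<and> Jmat n d h \<beta> \<noteq> 0}"
proof (rule ccontr)
  assume "\<not> ?thesis"
  then have "{\<beta> \<in> monoms n (Suc d). \<beta> 0 = Suc a \<and> Jmat n d h \<beta> \<noteq> 0} = {}"
    using finite_monoms_Collect by (simp add: card_gt_0_iff)
  then have J0: "Jmat n d h \<beta> = 0" if "\<beta> \<in> monoms n (Suc d)" "\<beta> 0 = Suc a" for \<beta>
    using that by auto
  have "n - 1 \<le> card {\<gamma> \<in> monoms n d. \<gamma> 0 = a \<and> h \<gamma> \<noteq> 0}"
    by (rule card_nonzero_layer_ge_if_Jmat_vanishes[of n d a h \<alpha>, OF J0 assms(2-4)])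
  with sparse show False by simp
qed

lemma card_Jmat_nonzero_layer_above_pos:
  assumes r: "r \<in> monoms n d" "0 < n" "0 < h r"
    and nonneg: "\<And>\<gamma>. \<gamma> \<in> monoms n d \<Longrightarrow> \<gamma> 0 = Suc (r 0) \<Longrightarrow> 0 \<le> h \<gamma>"
  shows "0 < card {\<beta> \<in> monoms n (Suc d). \<beta> 0 = Suc (r 0) \<and> Jmat n d h \<beta> \<noteq> 0}"
proof -
  have "0 < Jmat n d h (r(0 := Suc (r 0)))"
  proof (rule Jmat_raise_pos)
    show "r \<in> monoms n d" "0 < n" "0 < h r" using r by auto
    fix k assume "k < n" "k \<noteq> 0" "0 < r k"
    then show "0 \<le> h (r(0 := Suc (r 0), k := r k - 1))"
      using monoms_lower[OF monoms_raise[OF r(1,2)], of k] by (intro nonneg) auto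
  qed
  then have "r(0 := Suc (r 0)) \<in> {\<beta> \<in> monoms n (Suc d). \<beta> 0 = Suc (r 0) \<and> Jmat n d h \<beta> \<noteq> 0}"
    using monoms_raise[OF r(1,2)] by simp
  moreover have "finite {\<beta> \<in> monoms n (Suc d). \<beta> 0 = Suc (r 0) \<and> Jmat n d h \<beta> \<noteq> 0}"
    by (rule finite_monoms_Collect)
  ultimately show ?thesis unfolding card_gt_0_iff by blast
qed

lemma exists_pos_coeff_one_layer_up:
  assumes "0 < n" "\<And>\<beta>. \<beta> \<in> monoms n (Suc d) \<Longrightarrow> 0 \<le> Jmat n d h \<beta>"
    and p: "p \<in> monoms n d" "h p < 0"
  obtains r where "r \<in> monoms n d" "r 0 = Suc (p 0)" "0 < h r"
proof -
  let ?\<beta> = "p(0 := Suc (p 0))"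
  have \<beta>: "?\<beta> \<in> monoms n (Suc d)" using monoms_raise[OF p(1) assms(1)] .
  have "0 < ?\<beta> 0" by simp
  moreover have "h (?\<beta>(0 := ?\<beta> 0 - 1)) < 0" using p by simp
  ultimately obtain k where "k < n" "k \<noteq> 0" "0 < ?\<beta> k" "0 < h (?\<beta>(k := ?\<beta> k - 1))"
    by (rule exists_pos_lower_neighbour[OF assms(2)[OF \<beta>] assms(1)])
  then show ?thesis using monoms_lower[OF \<beta>, of k] that by simp
qed

lemma sum_card_layers_le_Rcount:
  assumes "finite S" "finite A"
  shows "(\<Sum>a\<in>A. card {\<beta> \<in> S. \<beta> 0 = a \<and> v \<beta> \<noteq> 0}) \<le> Rcount S v"
proof -
  have "(\<Sum>a\<in>A. card {\<beta> \<in> S. \<beta> 0 = a \<and> v \<beta> \<noteq> 0}) = card (\<Union>a\<in>A. {\<beta> \<in> S. \<beta> 0 = a \<and> v \<beta> \<noteq> 0})"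
    using assms by (intro card_UN_disjoint[symmetric]) auto
  also have "\<dots> \<le> Rcount S v"
    unfolding Rcount_def using assms(1) by (intro card_mono) auto
  finally show ?thesis .
qed

lemma Rcount_Jmat_ge_of_sign_pattern:
  assumes "4 \<le> n"
    and J_nonneg: "\<And>\<beta>. \<beta> \<in> monoms n (Suc d) \<Longrightarrow> 0 \<le> Jmat n d h \<beta>"
    and h_nonneg: "\<And>\<alpha>. \<alpha> \<in> monoms n d \<Longrightarrow> \<alpha> 0 \<noteq> 1 \<Longrightarrow> 0 \<le> h \<alpha>"
    and pos0: "card {\<alpha> \<in> monoms n d. \<alpha> 0 = 0 \<and> 0 < h \<alpha>} = 2"
    and neg1: "card {\<alpha> \<in> monoms n d. \<alpha> 0 = 1 \<and> h \<alpha> < 0} = 2"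
  shows "3 * n - 4 \<le> Rcount (monoms n (Suc d)) (Jmat n d h)"
proof -
  let ?Z = "\<lambda>a. card {\<beta> \<in> monoms n (Suc d). \<beta> 0 = a \<and> Jmat n d h \<beta> \<noteq> 0}"
  have n: "0 < n" using assms(1) by simp
  obtain \<alpha> \<alpha>' where \<alpha>\<alpha>': "{\<alpha> \<in> monoms n d. \<alpha> 0 = 0 \<and> 0 < h \<alpha>} = {\<alpha>, \<alpha>'}" "\<alpha> \<noteq> \<alpha>'"
    using pos0 by (auto simp: card_2_iff)
  then have "\<alpha> \<in> {\<alpha> \<in> monoms n d. \<alpha> 0 = 0 \<and> 0 < h \<alpha>}" "\<alpha>' \<in> {\<alpha> \<in> monoms n d. \<alpha> 0 = 0 \<and> 0 < h \<alpha>}"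
    by simp_all
  then have Z0: "2 * n - 3 \<le> ?Z 0"
    using \<alpha>\<alpha>'(2) h_nonneg by (intro card_Jmat_nonzero_bottom_layer) auto
  have "{\<alpha> \<in> monoms n d. \<alpha> 0 = 1 \<and> h \<alpha> < 0} \<noteq> {}" using neg1 by (metis card.empty zero_neq_numeral)
  then obtain p where p: "p \<in> monoms n d" "p 0 = 1" "h p < 0" by blast
  have "{\<gamma> \<in> monoms n d. \<gamma> 0 = 0 \<and> h \<gamma> \<noteq> 0} = {\<alpha> \<in> monoms n d. \<alpha> 0 = 0 \<and> 0 < h \<alpha>}"
    using h_nonneg by force
  with pos0 assms(1) have "card {\<gamma> \<in> monoms n d. \<gamma> 0 = 0 \<and> h \<gamma> \<noteq> 0} < n - 1" by simp
  then have Z1: "0 < ?Z 1"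
    using card_Jmat_nonzero_layer_pos_if_sparse_below[of n d 0 h p] p by simp
  obtain r where r: "r \<in> monoms n d" "r 0 = Suc 1" "0 < h r"
    using exists_pos_coeff_one_layer_up[of n d h p, OF n J_nonneg p(1,3)] p(2) by auto
  have Z2: "n - 3 \<le> ?Z 2"
    using card_Jmat_nonzero_layer_ge[where h = h, OF r] h_nonneg neg1 by (simp add: numeral_2_eq_2)
  have Z3: "0 < ?Z 3"
    using card_Jmat_nonzero_layer_above_pos[where h = h, OF r(1) n r(3)] h_nonneg r(2)
    by (simp add: numeral_3_eq_3)
  have "?Z 0 + ?Z 1 + ?Z 2 + ?Z 3 \<le> Rcount (monoms n (Suc d)) (Jmat n d h)"
    using sum_card_layers_le_Rcount[OF finite_monoms, of "{0, 1, 2, 3}" n "Suc d" "Jmat n d h"] by simp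
  then show ?thesis using Z0 Z1 Z2 Z3 assms(1) by linarith
qed

lemma nonneg_outside_layer_one:
  assumes n: "0 < n" and J_nonneg: "\<forall>\<beta>\<in>monoms n (Suc d). 0 \<le> Jmat n d h \<beta>"
    and no_neg: "\<And>j. j \<in> {1..d-2} \<or> j = d \<Longrightarrow> Ncount (monoms (n - 1) j) (hpart d h j) = 0"
    and \<alpha>: "\<alpha> \<in> monoms n d" "\<alpha> 0 \<noteq> 1"
  shows "0 \<le> h \<alpha>"
proof (cases "\<alpha> 0 = d")
  case True
  have "0 \<le> Jmat n d h (\<alpha>(0 := Suc d))" using J_nonneg monoms_raise[OF \<alpha>(1) n] True by simp
  then show ?thesis using Jmat_pure_power[OF \<alpha>(1) n True] by simp
next
  case False
  have \<alpha>0: "\<alpha> 0 \<le> d" using monoms_coord_le[OF \<alpha>(1)] .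
  with False \<alpha>(2) have "d - \<alpha> 0 \<in> {1..d-2} \<or> d - \<alpha> 0 = d" by auto
  then have "card {\<gamma> \<in> monoms n d. \<gamma> 0 = d - (d - \<alpha> 0) \<and> h \<gamma> < 0} = 0"
    using no_neg card_hpart_layer[of "d - \<alpha> 0" d n "\<lambda>x. x < 0" h] n by (simp add: Ncount_def)
  then have "{\<gamma> \<in> monoms n d. \<gamma> 0 = \<alpha> 0 \<and> h \<gamma> < 0} = {}"
    using finite_monoms_Collect \<alpha>0 by simp
  then show ?thesis using \<alpha>(1) by auto
qed

theorem proposition5p2:
  fixes n d :: nat and h :: "(nat \<Rightarrow> nat) \<Rightarrow> real"
  assumes "n \<ge> 4" and "d \<ge> 2"
    and "(\<Sum>i\<in>{1..d-2}. Ncount (monoms (n-1) i) (hpart d h i))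
           + Ncount (monoms (n-1) d) (hpart d h d) = 0"
    and "Pcount (monoms (n-1) d) (hpart d h d) = 2"
    and "Ncount (monoms (n-1) (d-1)) (hpart d h (d-1)) = 2"
    and "\<forall>\<beta>\<in>monoms n (d+1). Jmat n d h \<beta> \<ge> 0"
  shows "Rcount (monoms n (d+1)) (Jmat n d h) \<ge> 3*n - 4"
proof -
  have n: "0 < n" using assms(1) by simp
  have "Ncount (monoms (n - 1) j) (hpart d h j) = 0" if "j \<in> {1..d-2} \<or> j = d" for j
    using that assms(3) by auto
  then have h_nonneg: "0 \<le> h \<alpha>" if "\<alpha> \<in> monoms n d" "\<alpha> 0 \<noteq> 1" for \<alpha>
    using nonneg_outside_layer_one[OF n] assms(6) that by simp
  have "card {\<alpha> \<in> monoms n d. \<alpha> 0 = 0 \<and> 0 < h \<alpha>} = 2"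
    using assms(4) card_hpart_layer[of d d n "\<lambda>x. 0 < x" h] n by (simp add: Pcount_def)
  moreover have "card {\<alpha> \<in> monoms n d. \<alpha> 0 = 1 \<and> h \<alpha> < 0} = 2"
    using assms(2,5) card_hpart_layer[of "d - 1" d n "\<lambda>x. x < 0" h] n by (simp add: Ncount_def)
  ultimately show ?thesis
    using Rcount_Jmat_ge_of_sign_pattern[OF assms(1) _ h_nonneg] assms(6) by simp
qed

end
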